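(* Let $\partial:\mathcal{F}\to C(G)$ be a derivation such that $(\partial f)\circ\varphi=\partial(f\circ\varphi)$ for all $f\in\mathcal F$. Then there exists a unique derivation $\delta_\partial:\mathcal{B}\to B$ such that $\delta_\partial(V)=0$ and $\delta_\partial(M_f)=M_{\partial f}$ for all $f\in\mathcal F$; moreover $\delta_\partial$ is invariant.
   Context: Setup: $G$ is an infinite compact (Hausdorff) abelian group, written additively, and $x_1\in G$ generates a dense cyclic subgroup; $x_n=nx_1$, $\varphi(x)=x+x_1$. $\widehat G$ is the group of continuous characters and $\mathcal{F}$ is their linear span in $C(G)$ (a $\varphi$-stable algebra). Let $H=\ell^2(\mathbb{Z})$ with canonical basis $\{E_l\}$; $VE_l=E_{l+1}$, $M_fE_l=f(x_l)E_l$, $\mathbb{L}E_l=lE_l$. $B=C^*(V,M_f:f\in C(G))$ (isomorphic to the crossed product $C(G)\rtimes_\varphi\mathbb Z$), and $\mathcal{B}$ is the $*$-subalgebra generated by $V,V^{-1},M_\chi$ ($\chi\in\widehat G$). A derivation is a linear map satisfying the Leibniz rule; $\delta:\mathcal B\to B$ is invariant if $e^{-i\theta\mathbb L}\delta(e^{i\theta\mathbb L}be^{-i\theta\mathbb L})e^{i\theta\mathbb L}=\delta(b)$ for all $\theta\in\mathbb R$, $b\in\mathcal B$. *)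

theory Defs
  imports "HOL-Analysis.Analysis"
begin

fun natmul :: "nat \<Rightarrow> 'a::ab_group_add \<Rightarrow> 'a" where
  "natmul 0 x = 0"
| "natmul (Suc n) x = x + natmul n x"

definition intmul :: "int \<Rightarrow> 'a::ab_group_add \<Rightarrow> 'a" where
  "intmul n x = (if 0 \<le> n then natmul (nat n) x else - natmul (nat (- n)) x)"

definition CG :: "('g::topological_space \<Rightarrow> complex) set" where
  "CG = {f. continuous_on UNIV f}"

definition characters :: "('g::{topological_ab_group_add} \<Rightarrow> complex) set" where
  "characters = {ch. continuous_on UNIV ch \<and> (\<forall>x. cmod (ch x) = 1)
                      \<and> (\<forall>x y. ch (x + y) = ch x * ch y)}"

definition Fspan :: "('g::{topological_ab_group_add} \<Rightarrow> complex) set" where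
  "Fspan = {f. \<exists>S c. finite S \<and> S \<subseteq> characters \<and> f = (\<lambda>x. \<Sum>ch\<in>S. c ch * ch x)}"

definition is_F_derivation :: "(('g::{topological_ab_group_add} \<Rightarrow> complex) \<Rightarrow> ('g \<Rightarrow> complex)) \<Rightarrow> bool" where
  "is_F_derivation d \<longleftrightarrow>
     (\<forall>f\<in>Fspan. d f \<in> CG) \<and>
     (\<forall>f\<in>Fspan. \<forall>g\<in>Fspan. d (\<lambda>x. f x + g x) = (\<lambda>x. d f x + d g x)) \<and>
     (\<forall>f\<in>Fspan. \<forall>c::complex. d (\<lambda>x. c * f x) = (\<lambda>x. c * d f x)) \<and>
     (\<forall>f\<in>Fspan. \<forall>g\<in>Fspan. d (\<lambda>x. f x * g x) = (\<lambda>x. d f x * g x + f x * d g x))"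

typedef ell2 = "{v :: int \<Rightarrow> complex. (\<lambda>n. (cmod (v n))\<^sup>2) summable_on UNIV}"
  by (rule exI[of _ "\<lambda>_. 0"]) simp

instantiation ell2 :: "{zero, plus, minus, uminus}"
begin
definition "0 = Abs_ell2 (\<lambda>_. 0)"
definition "x + y = Abs_ell2 (\<lambda>n. Rep_ell2 x n + Rep_ell2 y n)"
definition "x - y = Abs_ell2 (\<lambda>n. Rep_ell2 x n - Rep_ell2 y n)"
definition "- x = Abs_ell2 (\<lambda>n. - Rep_ell2 x n)"
instance ..
end

definition l2scale :: "complex \<Rightarrow> ell2 \<Rightarrow> ell2" where
  "l2scale c x = Abs_ell2 (\<lambda>n. c * Rep_ell2 x n)"

definition l2norm :: "ell2 \<Rightarrow> real" where
  "l2norm x = sqrt (\<Sum>\<^sub>\<infinity>n. (cmod (Rep_ell2 x n))\<^sup>2)"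

definition l2inner :: "ell2 \<Rightarrow> ell2 \<Rightarrow> complex" where
  "l2inner x y = (\<Sum>\<^sub>\<infinity>n. cnj (Rep_ell2 x n) * Rep_ell2 y n)"

type_synonym op = "ell2 \<Rightarrow> ell2"

definition bounded_op :: "op \<Rightarrow> bool" where
  "bounded_op T \<longleftrightarrow> (\<forall>x y. T (x + y) = T x + T y) \<and> (\<forall>c x. T (l2scale c x) = l2scale c (T x))
      \<and> (\<exists>K. \<forall>x. l2norm (T x) \<le> K * l2norm x)"

definition opnorm :: "op \<Rightarrow> real" where
  "opnorm T = (SUP x\<in>{x. l2norm x \<le> 1}. l2norm (T x))"

definition op_zero :: op where "op_zero = (\<lambda>x. 0)"
definition op_add :: "op \<Rightarrow> op \<Rightarrow> op" where "op_add S T = (\<lambda>x. S x + T x)"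
definition op_diff :: "op \<Rightarrow> op \<Rightarrow> op" where "op_diff S T = (\<lambda>x. S x - T x)"
definition op_scale :: "complex \<Rightarrow> op \<Rightarrow> op" where "op_scale c T = (\<lambda>x. l2scale c (T x))"
definition op_mult :: "op \<Rightarrow> op \<Rightarrow> op" where "op_mult S T = S \<circ> T"

definition op_adj :: "op \<Rightarrow> op" where
  "op_adj T = (THE S. \<forall>x y. l2inner (T x) y = l2inner x (S y))"

inductive_set star_alg :: "op set \<Rightarrow> op set" for S where
  gen: "T \<in> S \<Longrightarrow> T \<in> star_alg S"
| add: "T1 \<in> star_alg S \<Longrightarrow> T2 \<in> star_alg S \<Longrightarrow> op_add T1 T2 \<in> star_alg S"
| scale: "T \<in> star_alg S \<Longrightarrow> op_scale c T \<in> star_alg S"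
| mult: "T1 \<in> star_alg S \<Longrightarrow> T2 \<in> star_alg S \<Longrightarrow> op_mult T1 T2 \<in> star_alg S"
| adj: "T \<in> star_alg S \<Longrightarrow> op_adj T \<in> star_alg S"

definition cstar_alg :: "op set \<Rightarrow> op set" where
  "cstar_alg S = {T. bounded_op T \<and> (\<forall>e>0. \<exists>A\<in>star_alg S. opnorm (op_diff T A) < e)}"

text \<open>V E_l = E_(l+1),  V^{-1} E_l = E_(l-1),  M_f E_l = f(x_l) E_l with x_l = l x_1,
  and e^{i theta L} E_l = e^{i theta l} E_l.\<close>
definition Vop :: op where "Vop x = Abs_ell2 (\<lambda>l. Rep_ell2 x (l - 1))"
definition Vinv :: op where "Vinv x = Abs_ell2 (\<lambda>l. Rep_ell2 x (l + 1))"
definition Mop :: "'g::ab_group_add \<Rightarrow> ('g \<Rightarrow> complex) \<Rightarrow> op" where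
  "Mop x1 f x = Abs_ell2 (\<lambda>l. f (intmul l x1) * Rep_ell2 x l)"
definition expL :: "real \<Rightarrow> op" where
  "expL \<theta> x = Abs_ell2 (\<lambda>l. exp (\<i> * complex_of_real (\<theta> * real_of_int l)) * Rep_ell2 x l)"

definition Balg :: "'g::topological_ab_group_add \<Rightarrow> op set" where
  "Balg x1 = cstar_alg ({Vop} \<union> {Mop x1 f | f. f \<in> CG})"

definition Bcal :: "'g::topological_ab_group_add \<Rightarrow> op set" where
  "Bcal x1 = star_alg ({Vop, Vinv} \<union> {Mop x1 ch | ch. ch \<in> characters})"

definition is_B_derivation :: "'g::topological_ab_group_add \<Rightarrow> (op \<Rightarrow> op) \<Rightarrow> bool" where
  "is_B_derivation x1 \<delta> \<longleftrightarrow>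
     (\<forall>b\<in>Bcal x1. \<delta> b \<in> Balg x1) \<and>
     (\<forall>a\<in>Bcal x1. \<forall>b\<in>Bcal x1. \<delta> (op_add a b) = op_add (\<delta> a) (\<delta> b)) \<and>
     (\<forall>a\<in>Bcal x1. \<forall>c. \<delta> (op_scale c a) = op_scale c (\<delta> a)) \<and>
     (\<forall>a\<in>Bcal x1. \<forall>b\<in>Bcal x1. \<delta> (op_mult a b) = op_add (op_mult (\<delta> a) b) (op_mult a (\<delta> b)))"

definition invariant_der :: "'g::topological_ab_group_add \<Rightarrow> (op \<Rightarrow> op) \<Rightarrow> bool" where
  "invariant_der x1 \<delta> \<longleftrightarrow>
     (\<forall>\<theta>::real. \<forall>b\<in>Bcal x1.
        op_mult (op_mult (expL (-\<theta>)) (\<delta> (op_mult (op_mult (expL \<theta>) b) (expL (-\<theta>))))) (expL \<theta>) = \<delta> b)"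

end

theory Submission
  imports Defs
begin

text \<open>Every element of the *-algebra generated by V, V^-1 and the M_chi is a finite sum
  M_{f_1} V^{n_1} + ... + M_{f_k} V^{n_k} with f_i in F, and the derivation is
  M_f V^n \<mapsto> M_{\<partial>f} V^n extended additively.  It is well defined because the coefficient of
  V^n is read off from the matrix entries f(x_k) = <E_k, b E_{k-n}> on the orbit {x_k}, which is
  dense.  The Leibniz rule reduces to monomials, where V^n M_h = M_{h(. - x_n)} V^n and the
  equivariance of \<partial> gives \<partial>(h(. - x_n)) = (\<partial>h)(. - x_n).  A derivation killing V kills
  every V^n, so it is determined by its values on the M_f; and conjugation by e^{i\<theta>L} multiplies
  the coefficient of V^n by the scalar e^{i\<theta>n}, which commutes with \<partial>.\<close>

lemma intmul_0 [simp]: "intmul 0 x = 0"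
  by (simp add: intmul_def)

lemma intmul_1 [simp]: "intmul 1 x = x"
  by (simp add: intmul_def)

lemma intmul_succ: "intmul (k + 1) x = x + intmul k x"
proof (cases "0 \<le> k")
  case True
  then have "nat (k + 1) = Suc (nat k)" by simp
  with True show ?thesis by (simp add: intmul_def)
next
  case False
  show ?thesis
  proof (cases "k = -1")
    case False
    with \<open>\<not> 0 \<le> k\<close> have "nat (- k) = Suc (nat (- (k + 1)))" by simp
    with False \<open>\<not> 0 \<le> k\<close> show ?thesis by (simp add: intmul_def algebra_simps)
  qed (simp add: intmul_def)
qed

lemma intmul_add: "intmul (a + b) x = intmul a x + intmul b x"
proof (induction a rule: int_induct[where k = 0])
  case (step1 i)
  then show ?case
    using intmul_succ[of "i + b" x] intmul_succ[of i x] by (simp add: algebra_simps)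
next
  case (step2 i)
  then show ?case
    using intmul_succ[of "i - 1 + b" x] intmul_succ[of "i - 1" x] by (simp add: algebra_simps)
qed simp

lemma intmul_minus: "intmul (- a) x = - intmul a x"
  using intmul_add[of a "- a" x] by (simp add: eq_neg_iff_add_eq_0 add.commute)

lemma intmul_diff: "intmul (a - b) x = intmul a x - intmul b x"
  using intmul_add[of a "- b" x] intmul_minus[of b x] by simp

definition square_summable :: "(int \<Rightarrow> complex) \<Rightarrow> bool" where
  "square_summable v \<longleftrightarrow> (\<lambda>n. (cmod (v n))\<^sup>2) summable_on UNIV"

lemma square_summable_Rep_ell2: "square_summable (Rep_ell2 x)"
  using Rep_ell2[of x] by (simp add: square_summable_def)

lemma Rep_ell2_Abs_ell2: "square_summable v \<Longrightarrow> Rep_ell2 (Abs_ell2 v) = v"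
  by (simp add: Abs_ell2_inverse square_summable_def)

lemma ell2_eqI: "(\<And>n. Rep_ell2 a n = Rep_ell2 b n) \<Longrightarrow> a = b"
  by (metis Rep_ell2_inject ext)

lemma cmod_add_square_le: "(cmod (a + b))\<^sup>2 \<le> 2 * (cmod a)\<^sup>2 + 2 * (cmod b)\<^sup>2"
proof -
  have "(cmod (a + b))\<^sup>2 \<le> (cmod a + cmod b)\<^sup>2"
    by (simp add: norm_triangle_ineq power_mono)
  also have "\<dots> \<le> 2 * (cmod a)\<^sup>2 + 2 * (cmod b)\<^sup>2"
    using zero_le_power2[of "cmod a - cmod b"] unfolding power2_sum power2_diff by linarith
  finally show ?thesis .
qed

lemma square_summable_add:
  assumes "square_summable u" "square_summable v"
  shows "square_summable (\<lambda>n. u n + v n)"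
  unfolding square_summable_def
proof (rule summable_on_comparison_test)
  show "(\<lambda>n. 2 * (cmod (u n))\<^sup>2 + 2 * (cmod (v n))\<^sup>2) summable_on UNIV"
    using assms unfolding square_summable_def by (intro summable_on_add summable_on_cmult_right)
qed (simp_all add: cmod_add_square_le)

lemma square_summable_bounded_mult:
  assumes "square_summable v" "\<And>n. cmod (a n) \<le> C"
  shows "square_summable (\<lambda>n. a n * v n)"
  unfolding square_summable_def
proof (rule summable_on_comparison_test)
  show "(\<lambda>n. C\<^sup>2 * (cmod (v n))\<^sup>2) summable_on UNIV"
    using assms unfolding square_summable_def by (intro summable_on_cmult_right)
  fix n
  have "(cmod (a n))\<^sup>2 \<le> C\<^sup>2"
    using assms(2)[of n] by (simp add: power_mono)
  then show "(cmod (a n * v n))\<^sup>2 \<le> C\<^sup>2 * (cmod (v n))\<^sup>2"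
    by (simp add: norm_mult power_mult_distrib mult_right_mono)
qed simp

lemma bij_betw_int_shift: "bij_betw (\<lambda>n::int. n - m) UNIV UNIV"
  by (rule bij_betwI[where g = "\<lambda>n. n + m"]) auto

lemma square_summable_shift: "square_summable v \<Longrightarrow> square_summable (\<lambda>n. v (n - m))"
  using summable_on_reindex_bij_betw[OF bij_betw_int_shift, of "\<lambda>n. (cmod (v n))\<^sup>2" m]
  by (simp add: square_summable_def)

lemma infsum_int_shift: "(\<Sum>\<^sub>\<infinity>n. h (n - m)) = (\<Sum>\<^sub>\<infinity>n::int. h n)"
  using infsum_reindex_bij_betw[OF bij_betw_int_shift, of h m] by simp

lemma Rep_ell2_plus: "Rep_ell2 (a + b) = (\<lambda>n. Rep_ell2 a n + Rep_ell2 b n)"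
  by (simp add: plus_ell2_def Rep_ell2_Abs_ell2 square_summable_add square_summable_Rep_ell2)

lemma Rep_ell2_minus: "Rep_ell2 (a - b) = (\<lambda>n. Rep_ell2 a n - Rep_ell2 b n)"
proof -
  have "square_summable (\<lambda>n. Rep_ell2 a n + (-1) * Rep_ell2 b n)"
    by (intro square_summable_add square_summable_bounded_mult[where C = 1]
        square_summable_Rep_ell2) simp
  then show ?thesis by (simp add: minus_ell2_def Rep_ell2_Abs_ell2)
qed

lemma Rep_ell2_zero: "Rep_ell2 0 = (\<lambda>n. 0)"
  by (simp add: zero_ell2_def Rep_ell2_Abs_ell2 square_summable_def)

lemma Rep_ell2_l2scale: "Rep_ell2 (l2scale c a) = (\<lambda>n. c * Rep_ell2 a n)"
  by (simp add: l2scale_def Rep_ell2_Abs_ell2 square_summable_bounded_mult[where C = "cmod c"]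
      square_summable_Rep_ell2)

lemma square_summable_inner:
  assumes "square_summable u" "square_summable v"
  shows "(\<lambda>n. cnj (u n) * v n) summable_on UNIV"
proof (rule abs_summable_summable, rule summable_on_comparison_test)
  show "(\<lambda>n. (cmod (u n))\<^sup>2 + (cmod (v n))\<^sup>2) summable_on UNIV"
    using assms unfolding square_summable_def by (rule summable_on_add)
  fix n
  have "cmod (u n) * cmod (v n) \<le> (cmod (u n))\<^sup>2 + (cmod (v n))\<^sup>2"
    using zero_le_power2[of "cmod (u n) - cmod (v n)"]
      mult_nonneg_nonneg[OF norm_ge_zero[of "u n"] norm_ge_zero[of "v n"]]
    unfolding power2_diff by linarith
  then show "norm (cnj (u n) * v n) \<le> (cmod (u n))\<^sup>2 + (cmod (v n))\<^sup>2"
    by (simp add: norm_mult)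
qed simp

definition unit_vector :: "int \<Rightarrow> ell2" where
  "unit_vector j = Abs_ell2 (\<lambda>k. if k = j then 1 else 0)"

lemma Rep_ell2_unit_vector: "Rep_ell2 (unit_vector j) = (\<lambda>k. if k = j then 1 else 0)"
proof -
  have "square_summable (\<lambda>k. if k = j then 1 else 0)"
    unfolding square_summable_def
    by (rule finite_nonzero_values_imp_summable_on) (rule finite_subset[of _ "{j}"], auto)
  then show ?thesis by (simp add: unit_vector_def Rep_ell2_Abs_ell2)
qed

lemma l2inner_unit_vector: "l2inner (unit_vector j) z = Rep_ell2 z j"
proof -
  have "l2inner (unit_vector j) z = (\<Sum>\<^sub>\<infinity>k. if k = j then Rep_ell2 z k else 0)"
    unfolding l2inner_def by (rule infsum_cong) (simp add: Rep_ell2_unit_vector)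
  also have "\<dots> = (\<Sum>\<^sub>\<infinity>k\<in>{j}. Rep_ell2 z k)"
    by (rule infsum_cong_neutral) auto
  finally show ?thesis by simp
qed

lemma op_adj_eqI:
  assumes "\<And>x y. l2inner (T x) y = l2inner x (S y)"
  shows "op_adj T = S"
  unfolding op_adj_def
proof (rule the_equality)
  fix S' assume "\<forall>x y. l2inner (T x) y = l2inner x (S' y)"
  then have "l2inner (unit_vector j) (S' y) = l2inner (unit_vector j) (S y)" for y j
    using assms by metis
  then show "S' = S" by (auto simp: l2inner_unit_vector intro!: ext ell2_eqI)
qed (use assms in blast)

section \<open>Operators with finitely many diagonals\<close>

text \<open>A symbol [(f_1, n_1), ..., (f_k, n_k)] encodes the operator
  M_{f_1} V^{n_1} + ... + M_{f_k} V^{n_k}; different symbols may encode the same operator.\<close>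

type_synonym 'g symbol = "(('g \<Rightarrow> complex) \<times> int) list"

lemma symbol_induct [case_names Nil Cons]:
  "P [] \<Longrightarrow> (\<And>f n L. P L \<Longrightarrow> P ((f, n) # L)) \<Longrightarrow> P L"
  by (induction L) auto

definition symbol_apply :: "'g::ab_group_add \<Rightarrow> 'g symbol \<Rightarrow> ell2 \<Rightarrow> int \<Rightarrow> complex" where
  "symbol_apply x1 L x k = (\<Sum>(f, n)\<leftarrow>L. f (intmul k x1) * Rep_ell2 x (k - n))"

definition symbol_op :: "'g::ab_group_add \<Rightarrow> 'g symbol \<Rightarrow> op" where
  "symbol_op x1 L x = Abs_ell2 (symbol_apply x1 L x)"

definition bounded_symbol :: "'g symbol \<Rightarrow> bool" where
  "bounded_symbol L \<longleftrightarrow> (\<forall>p\<in>set L. \<exists>C. \<forall>g. cmod (fst p g) \<le> C)"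

lemma symbol_apply_simps [simp]:
  "symbol_apply x1 [] x k = 0"
  "symbol_apply x1 ((f, n) # L) x k = f (intmul k x1) * Rep_ell2 x (k - n) + symbol_apply x1 L x k"
  "symbol_apply x1 (L1 @ L2) x k = symbol_apply x1 L1 x k + symbol_apply x1 L2 x k"
  by (simp_all add: symbol_apply_def)

lemma bounded_symbol_simps [simp]:
  "bounded_symbol []"
  "bounded_symbol ((f, n) # L) \<longleftrightarrow> (\<exists>C. \<forall>g. cmod (f g) \<le> C) \<and> bounded_symbol L"
  "bounded_symbol (L1 @ L2) \<longleftrightarrow> bounded_symbol L1 \<and> bounded_symbol L2"
  by (auto simp: bounded_symbol_def)

lemma square_summable_symbol_apply:
  "bounded_symbol L \<Longrightarrow> square_summable (symbol_apply x1 L x)"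
proof (induction L rule: symbol_induct)
  case Nil
  then show ?case by (simp add: square_summable_def)
next
  case (Cons f n L)
  then obtain C where "\<And>g. cmod (f g) \<le> C" by auto
  then have "square_summable (\<lambda>k. f (intmul k x1) * Rep_ell2 x (k - n))"
    by (intro square_summable_bounded_mult square_summable_shift square_summable_Rep_ell2)
  with Cons show ?case by (simp add: square_summable_add)
qed

lemma Rep_ell2_symbol_op:
  "bounded_symbol L \<Longrightarrow> Rep_ell2 (symbol_op x1 L x) = symbol_apply x1 L x"
  by (simp add: symbol_op_def Rep_ell2_Abs_ell2 square_summable_symbol_apply)

lemma symbol_op_eqI:
  "(\<And>x k. symbol_apply x1 L1 x k = symbol_apply x1 L2 x k) \<Longrightarrow> symbol_op x1 L1 = symbol_op x1 L2"
  by (auto simp: symbol_op_def intro!: ext arg_cong[where f = Abs_ell2])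

lemma symbol_op_append:
  assumes "bounded_symbol L1" "bounded_symbol L2"
  shows "op_add (symbol_op x1 L1) (symbol_op x1 L2) = symbol_op x1 (L1 @ L2)"
  unfolding op_add_def plus_ell2_def symbol_op_def[of x1 "L1 @ L2"]
  using assms by (intro ext arg_cong[where f = Abs_ell2]) (simp add: Rep_ell2_symbol_op)

lemma symbol_op_Cons:
  "bounded_symbol [(f, n)] \<Longrightarrow> bounded_symbol L \<Longrightarrow>
    symbol_op x1 ((f, n) # L) = op_add (symbol_op x1 [(f, n)]) (symbol_op x1 L)"
  by (simp add: symbol_op_append)

definition symbol_scale :: "complex \<Rightarrow> 'g symbol \<Rightarrow> 'g symbol" where
  "symbol_scale c L = map (\<lambda>(f, n). (\<lambda>g. c * f g, n)) L"

lemma symbol_scale_simps [simp]: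
  "symbol_scale c [] = []"
  "symbol_scale c ((f, n) # L) = (\<lambda>g. c * f g, n) # symbol_scale c L"
  by (simp_all add: symbol_scale_def)

lemma symbol_op_scale:
  assumes "bounded_symbol L"
  shows "op_scale c (symbol_op x1 L) = symbol_op x1 (symbol_scale c L)"
proof -
  have "symbol_apply x1 (symbol_scale c L) x k = c * symbol_apply x1 L x k" for x k
    by (induction L rule: symbol_induct) (simp_all add: algebra_simps)
  then show ?thesis
    unfolding op_scale_def l2scale_def symbol_op_def[of x1 "symbol_scale c L"]
    using assms by (intro ext arg_cong[where f = Abs_ell2]) (simp add: Rep_ell2_symbol_op)
qed

text \<open>Since V^n M_h = M_{h(. - n x_1)} V^n, the product of monomials is
  M_f V^n M_h V^m = M_{f h(. - n x_1)} V^{n+m}.\<close>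

definition monomial_mult :: "'g::ab_group_add \<Rightarrow> ('g \<Rightarrow> complex) \<Rightarrow> int \<Rightarrow> 'g symbol \<Rightarrow> 'g symbol" where
  "monomial_mult x1 f n L = map (\<lambda>(h, m). (\<lambda>g. f g * h (g - intmul n x1), n + m)) L"

definition symbol_mult :: "'g::ab_group_add \<Rightarrow> 'g symbol \<Rightarrow> 'g symbol \<Rightarrow> 'g symbol" where
  "symbol_mult x1 L1 L2 = concat (map (\<lambda>(f, n). monomial_mult x1 f n L2) L1)"

lemma monomial_mult_simps [simp]:
  "monomial_mult x1 f n [] = []"
  "monomial_mult x1 f n ((h, m) # L) = (\<lambda>g. f g * h (g - intmul n x1), n + m) # monomial_mult x1 f n L"
  by (simp_all add: monomial_mult_def)

lemma symbol_mult_simps [simp]: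
  "symbol_mult x1 [] L2 = []"
  "symbol_mult x1 ((f, n) # L1) L2 = monomial_mult x1 f n L2 @ symbol_mult x1 L1 L2"
  by (simp_all add: symbol_mult_def)

lemma bounded_symbol_mult:
  assumes "bounded_symbol L1" "bounded_symbol L2"
  shows "bounded_symbol (symbol_mult x1 L1 L2)"
  using assms(1)
proof (induction L1 rule: symbol_induct)
  case (Cons f n L1)
  then obtain C where C: "\<And>g. cmod (f g) \<le> C" by auto
  have "bounded_symbol (monomial_mult x1 f n L2)"
    using assms(2)
  proof (induction L2 rule: symbol_induct)
    case (Cons h m L2)
    then obtain D where "\<And>g. cmod (h g) \<le> D" by auto
    then have "\<forall>g. cmod (f g * h (g - intmul n x1)) \<le> C * D"
      using C by (simp add: norm_mult mult_mono' order_trans[OF _ C])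
    with Cons show ?case by auto
  qed simp
  with Cons show ?case by simp
qed simp

lemma symbol_apply_mult:
  assumes "bounded_symbol L2"
  shows "symbol_apply x1 (symbol_mult x1 L1 L2) x k = symbol_apply x1 L1 (symbol_op x1 L2 x) k"
proof -
  have "symbol_apply x1 (monomial_mult x1 f n L2) x k = f (intmul k x1) * symbol_apply x1 L2 x (k - n)"
    for f n
    by (induction L2 rule: symbol_induct) (simp_all add: algebra_simps intmul_diff)
  then show ?thesis
    using assms by (induction L1 rule: symbol_induct) (simp_all add: Rep_ell2_symbol_op)
qed

lemma symbol_op_mult:
  assumes "bounded_symbol L2"
  shows "op_mult (symbol_op x1 L1) (symbol_op x1 L2) = symbol_op x1 (symbol_mult x1 L1 L2)"
  unfolding op_mult_def
proof (rule ext)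
  fix x
  have "symbol_apply x1 (symbol_mult x1 L1 L2) x = symbol_apply x1 L1 (symbol_op x1 L2 x)"
    using assms by (simp add: symbol_apply_mult fun_eq_iff)
  then show "(symbol_op x1 L1 \<circ> symbol_op x1 L2) x = symbol_op x1 (symbol_mult x1 L1 L2) x"
    by (simp add: symbol_op_def)
qed

text \<open>The adjoint of M_f V^n is V^{-n} M_{cnj f} = M_{cnj f(. + n x_1)} V^{-n}.\<close>

definition symbol_adj :: "'g::ab_group_add \<Rightarrow> 'g symbol \<Rightarrow> 'g symbol" where
  "symbol_adj x1 L = map (\<lambda>(f, n). (\<lambda>g. cnj (f (g + intmul n x1)), - n)) L"

lemma symbol_adj_simps [simp]:
  "symbol_adj x1 [] = []"
  "symbol_adj x1 ((f, n) # L) = (\<lambda>g. cnj (f (g + intmul n x1)), - n) # symbol_adj x1 L"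
  by (simp_all add: symbol_adj_def)

lemma bounded_symbol_adj: "bounded_symbol L \<Longrightarrow> bounded_symbol (symbol_adj x1 L)"
  by (induction L rule: symbol_induct) auto

lemma infsum_monomial_adj:
  "(\<Sum>\<^sub>\<infinity>k. cnj (f (intmul k x1) * Rep_ell2 x (k - n)) * Rep_ell2 y k)
   = (\<Sum>\<^sub>\<infinity>j. cnj (Rep_ell2 x j) * (cnj (f (intmul j x1 + intmul n x1)) * Rep_ell2 y (j + n)))"
  (is "infsum ?h UNIV = _")
proof -
  have "infsum ?h UNIV = (\<Sum>\<^sub>\<infinity>j. ?h (j - (- n)))"
    by (rule infsum_int_shift[symmetric])
  also have "\<dots> = (\<Sum>\<^sub>\<infinity>j. cnj (Rep_ell2 x j) * (cnj (f (intmul j x1 + intmul n x1)) * Rep_ell2 y (j + n)))"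
    by (rule infsum_cong) (simp add: intmul_add)
  finally show ?thesis .
qed

lemma l2inner_symbol_op:
  assumes "bounded_symbol L"
  shows "l2inner (symbol_op x1 L x) y = l2inner x (symbol_op x1 (symbol_adj x1 L) y)"
proof -
  have "(\<Sum>\<^sub>\<infinity>k. cnj (symbol_apply x1 L x k) * Rep_ell2 y k)
      = (\<Sum>\<^sub>\<infinity>j. cnj (Rep_ell2 x j) * symbol_apply x1 (symbol_adj x1 L) y j)"
    using assms
  proof (induction L rule: symbol_induct)
    case (Cons f n L)
    then obtain C where C: "\<And>g. cmod (f g) \<le> C" and L: "bounded_symbol L" by auto
    have summable_left: "(\<lambda>k. cnj (f (intmul k x1) * Rep_ell2 x (k - n)) * Rep_ell2 y k) summable_on UNIV"
      by (intro square_summable_inner square_summable_bounded_mult[OF _ C]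
          square_summable_shift square_summable_Rep_ell2)
    have "square_summable (\<lambda>j. cnj (f (intmul j x1 + intmul n x1)) * Rep_ell2 y (j - (- n)))"
      by (intro square_summable_bounded_mult[where C = C] square_summable_shift
          square_summable_Rep_ell2) (simp add: C)
    then have summable_right:
      "(\<lambda>j. cnj (Rep_ell2 x j) * (cnj (f (intmul j x1 + intmul n x1)) * Rep_ell2 y (j + n))) summable_on UNIV"
      by (intro square_summable_inner square_summable_Rep_ell2) simp
    have "(\<Sum>\<^sub>\<infinity>k. cnj (symbol_apply x1 ((f, n) # L) x k) * Rep_ell2 y k)
        = (\<Sum>\<^sub>\<infinity>k. cnj (f (intmul k x1) * Rep_ell2 x (k - n)) * Rep_ell2 y k)
          + (\<Sum>\<^sub>\<infinity>k. cnj (symbol_apply x1 L x k) * Rep_ell2 y k)"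
      unfolding symbol_apply_simps complex_cnj_add distrib_right
      by (intro infsum_add summable_left square_summable_inner
          square_summable_symbol_apply[OF L] square_summable_Rep_ell2)
    also have "\<dots> = (\<Sum>\<^sub>\<infinity>j. cnj (Rep_ell2 x j) * (cnj (f (intmul j x1 + intmul n x1)) * Rep_ell2 y (j + n)))
          + (\<Sum>\<^sub>\<infinity>j. cnj (Rep_ell2 x j) * symbol_apply x1 (symbol_adj x1 L) y j)"
      by (simp only: infsum_monomial_adj Cons.IH[OF L])
    also have "\<dots> = (\<Sum>\<^sub>\<infinity>j. cnj (Rep_ell2 x j) * (cnj (f (intmul j x1 + intmul n x1)) * Rep_ell2 y (j + n))
          + cnj (Rep_ell2 x j) * symbol_apply x1 (symbol_adj x1 L) y j)"
      by (intro infsum_add[symmetric] summable_right square_summable_inner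
          square_summable_symbol_apply bounded_symbol_adj[OF L] square_summable_Rep_ell2)
    also have "\<dots> = (\<Sum>\<^sub>\<infinity>j. cnj (Rep_ell2 x j) * symbol_apply x1 (symbol_adj x1 ((f, n) # L)) y j)"
      by (simp add: distrib_left)
    finally show ?case .
  qed simp
  then show ?thesis
    by (simp add: l2inner_def Rep_ell2_symbol_op assms bounded_symbol_adj)
qed

lemma op_adj_symbol_op:
  "bounded_symbol L \<Longrightarrow> op_adj (symbol_op x1 L) = symbol_op x1 (symbol_adj x1 L)"
  by (intro op_adj_eqI l2inner_symbol_op)

definition Vpow :: "int \<Rightarrow> op" where
  "Vpow n x = Abs_ell2 (\<lambda>l. Rep_ell2 x (l - n))"

lemma Rep_ell2_Vpow: "Rep_ell2 (Vpow n x) = (\<lambda>l. Rep_ell2 x (l - n))"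
  unfolding Vpow_def by (intro Rep_ell2_Abs_ell2 square_summable_shift square_summable_Rep_ell2)

lemma Vpow_1: "Vpow 1 = Vop"
  by (simp add: Vpow_def Vop_def fun_eq_iff)

lemma Vpow_minus_1: "Vpow (- 1) = Vinv"
  by (simp add: Vpow_def Vinv_def fun_eq_iff)

lemma Vpow_0: "Vpow 0 = (\<lambda>x. x)"
  by (simp add: Vpow_def Rep_ell2_inverse fun_eq_iff)

lemma Vpow_add: "op_mult (Vpow m) (Vpow n) = Vpow (m + n)"
  by (simp add: op_mult_def Vpow_def[of m] Vpow_def[of "m + n"] Rep_ell2_Vpow algebra_simps fun_eq_iff)

lemma Vpow_symbol: "Vpow n = symbol_op x1 [(\<lambda>_. 1, n)]"
  unfolding Vpow_def symbol_op_def by (intro ext arg_cong[where f = Abs_ell2]) simp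

lemma Mop_symbol: "Mop x1 f = symbol_op x1 [(f, 0)]"
  unfolding Mop_def symbol_op_def by (intro ext arg_cong[where f = Abs_ell2]) simp

lemma op_zero_symbol: "op_zero = symbol_op x1 []"
  unfolding op_zero_def zero_ell2_def symbol_op_def by (intro ext arg_cong[where f = Abs_ell2]) simp

lemma bounded_symbol_const: "bounded_symbol [(\<lambda>_. c, n)]"
  by auto

lemma Mop_mult_Vpow: "op_mult (Mop x1 f) (Vpow n) = symbol_op x1 [(f, n)]"
  unfolding Mop_symbol Vpow_symbol[of n x1] symbol_op_mult[OF bounded_symbol_const]
  by (rule symbol_op_eqI) simp

lemma Mop_add:
  assumes "bounded_symbol [(f, 0)]" "bounded_symbol [(g, 0)]"
  shows "Mop x1 (\<lambda>x. f x + g x) = op_add (Mop x1 f) (Mop x1 g)"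
  unfolding Mop_symbol symbol_op_append[OF assms]
  by (rule symbol_op_eqI) (simp add: algebra_simps)

lemma Mop_scale: "bounded_symbol [(f, 0)] \<Longrightarrow> Mop x1 (\<lambda>x. c * f x) = op_scale c (Mop x1 f)"
  by (simp add: Mop_symbol symbol_op_scale)

lemma op_adj_Vop: "op_adj Vop = Vinv"
  unfolding Vpow_1[symmetric] Vpow_minus_1[symmetric] Vpow_symbol[where ?x1.0 = "0::int"]
    op_adj_symbol_op[OF bounded_symbol_const]
  by (rule symbol_op_eqI) simp

lemma characters_one: "(\<lambda>_. 1) \<in> characters"
  by (simp add: characters_def)

lemma characters_mult: "ch \<in> characters \<Longrightarrow> ps \<in> characters \<Longrightarrow> (\<lambda>x. ch x * ps x) \<in> characters"
  by (auto simp: characters_def norm_mult intro!: continuous_intros)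

lemma characters_cnj: "ch \<in> characters \<Longrightarrow> (\<lambda>x. cnj (ch x)) \<in> characters"
  by (auto simp: characters_def intro!: continuous_intros)

lemma Fspan_elim:
  assumes "f \<in> Fspan"
  obtains S c where "finite S" "S \<subseteq> characters" "f = (\<lambda>x. \<Sum>ch\<in>S. c ch * ch x)"
  using assms unfolding Fspan_def by blast

lemma Fspan_add_character:
  assumes "ch \<in> characters" "g \<in> Fspan"
  shows "(\<lambda>x. c * ch x + g x) \<in> Fspan"
proof -
  obtain S e where S: "finite S" "S \<subseteq> characters" "g = (\<lambda>x. \<Sum>ps\<in>S. e ps * ps x)"
    using assms(2) by (rule Fspan_elim)
  define e' where "e' ps = (if ps \<in> S then e ps else 0) + (if ps = ch then c else 0)" for ps
  have if_mult: "(if P then a else 0) * b = (if P then a * b else 0)" for P and a b :: complex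
    by simp
  have "(\<Sum>ps\<in>insert ch S. (if ps \<in> S then e ps else 0) * ps x) = g x" for x
    using S(1) by (simp add: S(3) if_mult sum.inter_restrict[symmetric] Int_absorb1 subset_insertI)
  moreover have "(\<Sum>ps\<in>insert ch S. (if ps = ch then c else 0) * ps x) = c * ch x" for x
    using S(1) by (simp add: if_mult sum.delta)
  ultimately have "c * ch x + g x = (\<Sum>ps\<in>insert ch S. e' ps * ps x)" for x
    by (simp add: e'_def distrib_right sum.distrib)
  with S(1,2) assms(1) show ?thesis
    unfolding Fspan_def by (auto intro!: exI[of _ "insert ch S"] exI[of _ e'])
qed

lemma Fspan_zero: "(\<lambda>_. 0) \<in> Fspan"
  unfolding Fspan_def by (auto intro!: exI[of _ "{}"])

lemma Fspan_induct [consumes 1, case_names zero step]: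
  assumes "f \<in> Fspan" "P (\<lambda>_. 0)"
    and "\<And>ch c g. ch \<in> characters \<Longrightarrow> g \<in> Fspan \<Longrightarrow> P g \<Longrightarrow> P (\<lambda>x. c * ch x + g x)"
  shows "P f"
proof -
  obtain S c where S: "finite S" "S \<subseteq> characters" "f = (\<lambda>x. \<Sum>ch\<in>S. c ch * ch x)"
    using assms(1) by (rule Fspan_elim)
  have "(\<lambda>x. \<Sum>ch\<in>S. c ch * ch x) \<in> Fspan \<and> P (\<lambda>x. \<Sum>ch\<in>S. c ch * ch x)"
    using S(1,2)
  proof (induction S rule: finite_induct)
    case (insert ch S)
    then show ?case
      using Fspan_add_character[of ch "\<lambda>x. \<Sum>ch\<in>S. c ch * ch x" "c ch"]
        assms(3)[of ch "\<lambda>x. \<Sum>ch\<in>S. c ch * ch x" "c ch"]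
      by simp
  qed (simp add: Fspan_zero assms(2))
  with S(3) show ?thesis by simp
qed

lemma characters_Fspan: "ch \<in> characters \<Longrightarrow> ch \<in> Fspan"
  using Fspan_add_character[OF _ Fspan_zero, of ch 1] by simp

lemma Fspan_scale: "f \<in> Fspan \<Longrightarrow> (\<lambda>x. c * f x) \<in> Fspan"
proof (induction f rule: Fspan_induct)
  case (step ch c' g)
  then show ?case
    using Fspan_add_character[of ch "\<lambda>x. c * g x" "c * c'"] by (simp add: algebra_simps)
qed (simp add: Fspan_zero)

lemma Fspan_add: "f \<in> Fspan \<Longrightarrow> g \<in> Fspan \<Longrightarrow> (\<lambda>x. f x + g x) \<in> Fspan"
proof (induction f rule: Fspan_induct)
  case (step ch c f)
  then show ?case
    using Fspan_add_character[of ch "\<lambda>x. f x + g x" c] by (simp add: add.assoc)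
qed simp

lemma Fspan_character_mult:
  "g \<in> Fspan \<Longrightarrow> ch \<in> characters \<Longrightarrow> (\<lambda>x. ch x * g x) \<in> Fspan"
proof (induction g rule: Fspan_induct)
  case (step ps c g)
  then show ?case
    using Fspan_add_character[OF characters_mult[of ch ps], of "\<lambda>x. ch x * g x" c]
    by (simp add: algebra_simps)
qed (simp add: Fspan_zero)

lemma Fspan_mult: "f \<in> Fspan \<Longrightarrow> g \<in> Fspan \<Longrightarrow> (\<lambda>x. f x * g x) \<in> Fspan"
proof (induction f rule: Fspan_induct)
  case (step ch c f)
  then show ?case
    using Fspan_add[OF Fspan_scale[OF Fspan_character_mult[of g ch]], of "\<lambda>x. f x * g x" c]
    by (simp add: algebra_simps)
qed (simp add: Fspan_zero)

lemma Fspan_shift: "f \<in> Fspan \<Longrightarrow> (\<lambda>x. f (x + a)) \<in> Fspan"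
proof (induction f rule: Fspan_induct)
  case (step ch c g)
  then have "ch (x + a) = ch a * ch x" for x
    by (simp add: characters_def)
  with step show ?case
    using Fspan_add_character[of ch "\<lambda>x. g (x + a)" "c * ch a"] by (simp add: mult.assoc)
qed (simp add: Fspan_zero)

lemma Fspan_cnj: "f \<in> Fspan \<Longrightarrow> (\<lambda>x. cnj (f x)) \<in> Fspan"
proof (induction f rule: Fspan_induct)
  case (step ch c g)
  then show ?case
    using Fspan_add_character[OF characters_cnj, of ch "\<lambda>x. cnj (g x)" "cnj c"] by simp
qed (simp add: Fspan_zero)

lemma continuous_on_Fspan: "f \<in> Fspan \<Longrightarrow> continuous_on UNIV f"
  by (induction f rule: Fspan_induct) (auto simp: characters_def intro!: continuous_intros)

lemma
  assumes "is_F_derivation d"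
  shows F_derivation_continuous: "f \<in> Fspan \<Longrightarrow> continuous_on UNIV (d f)"
    and F_derivation_add: "f \<in> Fspan \<Longrightarrow> g \<in> Fspan \<Longrightarrow> d (\<lambda>x. f x + g x) = (\<lambda>x. d f x + d g x)"
    and F_derivation_scale: "f \<in> Fspan \<Longrightarrow> d (\<lambda>x. c * f x) = (\<lambda>x. c * d f x)"
    and F_derivation_mult:
      "f \<in> Fspan \<Longrightarrow> g \<in> Fspan \<Longrightarrow> d (\<lambda>x. f x * g x) = (\<lambda>x. d f x * g x + f x * d g x)"
  using assms unfolding is_F_derivation_def CG_def by auto

lemma F_derivation_zero: "is_F_derivation d \<Longrightarrow> d (\<lambda>_. 0) = (\<lambda>_. 0)"
  using F_derivation_scale[OF _ Fspan_zero, of d 0] by simp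

lemma F_derivation_one: "is_F_derivation d \<Longrightarrow> d (\<lambda>_. 1) = (\<lambda>_. 0)"
  using F_derivation_mult[OF _ characters_Fspan[OF characters_one] characters_Fspan[OF characters_one],
      of d]
  by (simp add: fun_eq_iff)

definition shift_commuting :: "(('g::topological_ab_group_add \<Rightarrow> complex) \<Rightarrow> ('g \<Rightarrow> complex)) \<Rightarrow> 'g \<Rightarrow> bool" where
  "shift_commuting d a \<longleftrightarrow> (\<forall>f\<in>Fspan. d (\<lambda>x. f (x + a)) = (\<lambda>x. d f (x + a)))"

lemma shift_commutingD:
  "shift_commuting d a \<Longrightarrow> f \<in> Fspan \<Longrightarrow> d (\<lambda>x. f (x + a)) = (\<lambda>x. d f (x + a))"
  unfolding shift_commuting_def by blast

lemma shift_commuting_add: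
  assumes "shift_commuting d a" "shift_commuting d b"
  shows "shift_commuting d (a + b)"
  unfolding shift_commuting_def
proof
  fix f :: "'a \<Rightarrow> complex" assume f: "f \<in> Fspan"
  have "d (\<lambda>x. f (x + a + b)) = (\<lambda>x. d (\<lambda>y. f (y + b)) (x + a))"
    using shift_commutingD[OF assms(1) Fspan_shift[OF f, of b]] by simp
  also have "\<dots> = (\<lambda>x. d f (x + a + b))"
    by (simp add: shift_commutingD[OF assms(2) f])
  finally show "d (\<lambda>x. f (x + (a + b))) = (\<lambda>x. d f (x + (a + b)))"
    by (simp add: add.assoc)
qed

lemma shift_commuting_minus:
  assumes "shift_commuting d a"
  shows "shift_commuting d (- a)"
  unfolding shift_commuting_def
proof
  fix f :: "'a \<Rightarrow> complex" assume f: "f \<in> Fspan"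
  have "d f = (\<lambda>x. d (\<lambda>y. f (y + - a)) (x + a))"
    using shift_commutingD[OF assms Fspan_shift[OF f, of "- a"]] by simp
  then have "d f (x + - a) = d (\<lambda>y. f (y + - a)) x" for x
    by (simp add: fun_eq_iff)
  then show "d (\<lambda>x. f (x + - a)) = (\<lambda>x. d f (x + - a))"
    by simp
qed

lemma shift_commuting_intmul:
  assumes "shift_commuting d a"
  shows "shift_commuting d (intmul k a)"
proof (induction k rule: int_induct[where k = 0])
  case base
  show ?case by (simp add: shift_commuting_def)
next
  case (step1 i)
  then show ?case
    using shift_commuting_add[OF assms] by (simp add: intmul_succ)
next
  case (step2 i)
  then show ?case
    using shift_commuting_add[OF shift_commuting_minus[OF assms]]
    by (simp add: intmul_diff)
qed

definition F_symbol :: "'g::topological_ab_group_add symbol \<Rightarrow> bool" where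
  "F_symbol L \<longleftrightarrow> (\<forall>p\<in>set L. fst p \<in> Fspan)"

definition continuous_symbol :: "'g::topological_space symbol \<Rightarrow> bool" where
  "continuous_symbol L \<longleftrightarrow> (\<forall>p\<in>set L. continuous_on UNIV (fst p))"

lemma F_symbol_simps [simp]:
  "F_symbol []"
  "F_symbol ((f, n) # L) \<longleftrightarrow> f \<in> Fspan \<and> F_symbol L"
  "F_symbol (L1 @ L2) \<longleftrightarrow> F_symbol L1 \<and> F_symbol L2"
  by (auto simp: F_symbol_def)

lemma continuous_symbol_simps [simp]:
  "continuous_symbol []"
  "continuous_symbol ((f, n) # L) \<longleftrightarrow> continuous_on UNIV f \<and> continuous_symbol L"
  by (simp_all add: continuous_symbol_def)

lemma continuous_symbol_if_F_symbol: "F_symbol L \<Longrightarrow> continuous_symbol L"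
  by (induction L rule: symbol_induct) (simp_all add: continuous_on_Fspan)

lemma bounded_continuous_function:
  assumes "compact (UNIV :: 'g::topological_space set)" "continuous_on UNIV (f :: 'g \<Rightarrow> complex)"
  shows "\<exists>C. \<forall>g. cmod (f g) \<le> C"
  using compact_imp_bounded[OF compact_continuous_image[OF assms(2,1)]]
  unfolding bounded_iff by blast

lemma bounded_symbol_if_continuous_symbol:
  "compact (UNIV :: 'g::topological_space set) \<Longrightarrow> continuous_symbol (L :: 'g symbol) \<Longrightarrow> bounded_symbol L"
  by (induction L rule: symbol_induct) (simp_all add: bounded_continuous_function)

lemma bounded_symbol_if_F_symbol:
  "compact (UNIV :: 'g::topological_ab_group_add set) \<Longrightarrow> F_symbol (L :: 'g symbol) \<Longrightarrow> bounded_symbol L"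
  by (simp add: bounded_symbol_if_continuous_symbol continuous_symbol_if_F_symbol)

lemma F_symbol_scale: "F_symbol L \<Longrightarrow> F_symbol (symbol_scale c L)"
  by (induction L rule: symbol_induct) (simp_all add: Fspan_scale)

lemma F_symbol_mult:
  assumes "F_symbol L1" "F_symbol L2"
  shows "F_symbol (symbol_mult x1 L1 L2)"
proof -
  have "F_symbol (monomial_mult x1 f n L2)" if "f \<in> Fspan" for f n
    using assms(2)
  proof (induction L2 rule: symbol_induct)
    case (Cons h m L2)
    then have "(\<lambda>g. h (g + - intmul n x1)) \<in> Fspan"
      by (intro Fspan_shift) simp
    with Cons that show ?case
      by (simp add: Fspan_mult)
  qed simp
  with assms(1) show ?thesis
    by (induction L1 rule: symbol_induct) simp_all
qed

lemma F_symbol_adj: "F_symbol L \<Longrightarrow> F_symbol (symbol_adj x1 L)"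
  by (induction L rule: symbol_induct) (simp_all add: Fspan_shift Fspan_cnj)

fun symbol_coeff :: "'g symbol \<Rightarrow> int \<Rightarrow> 'g \<Rightarrow> complex" where
  "symbol_coeff [] n = (\<lambda>_. 0)"
| "symbol_coeff ((f, m) # L) n = (\<lambda>g. (if m = n then f g else 0) + symbol_coeff L n g)"

lemma symbol_apply_eq_coeff_sum:
  assumes "finite N" "snd ` set L \<subseteq> N"
  shows "symbol_apply x1 L x k = (\<Sum>n\<in>N. symbol_coeff L n (intmul k x1) * Rep_ell2 x (k - n))"
  using assms(2)
proof (induction L rule: symbol_induct)
  case (Cons f m L)
  have "(\<Sum>n\<in>N. symbol_coeff ((f, m) # L) n (intmul k x1) * Rep_ell2 x (k - n))
      = (\<Sum>n\<in>N. (if m = n then f (intmul k x1) * Rep_ell2 x (k - n) else 0))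
        + (\<Sum>n\<in>N. symbol_coeff L n (intmul k x1) * Rep_ell2 x (k - n))"
    unfolding sum.distrib[symmetric] by (rule sum.cong) (simp_all add: distrib_right)
  also have "(\<Sum>n\<in>N. (if m = n then f (intmul k x1) * Rep_ell2 x (k - n) else 0))
      = f (intmul k x1) * Rep_ell2 x (k - m)"
    using Cons.prems assms(1) by (simp add: sum.delta)
  finally show ?case
    using Cons by simp
qed simp

lemma symbol_apply_unit_vector:
  "symbol_apply x1 L (unit_vector l) k = symbol_coeff L (k - l) (intmul k x1)"
  by (induction L rule: symbol_induct) (auto simp: Rep_ell2_unit_vector)

lemma continuous_symbol_coeff: "continuous_symbol L \<Longrightarrow> continuous_on UNIV (symbol_coeff L n)"
proof (induction L rule: symbol_induct)
  case (Cons f m L)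
  then show ?case by (cases "m = n") (simp_all add: continuous_on_add)
qed simp

lemma Fspan_symbol_coeff: "F_symbol L \<Longrightarrow> symbol_coeff L n \<in> Fspan"
proof (induction L rule: symbol_induct)
  case (Cons f m L)
  then show ?case by (cases "m = n") (simp_all add: Fspan_add)
qed (simp add: Fspan_zero)

text \<open>The matrix entries of the operator determine the coefficients on the orbit {k x_1}, and
  by continuity and density of the orbit everywhere.\<close>

lemma symbol_coeff_unique:
  fixes x1 :: "'g::topological_ab_group_add"
  assumes dense: "closure (range (\<lambda>n::int. intmul n x1)) = UNIV"
    and "bounded_symbol L1" "bounded_symbol L2" "continuous_symbol L1" "continuous_symbol L2"
    and eq: "symbol_op x1 L1 = symbol_op x1 L2"
  shows "symbol_coeff L1 n = symbol_coeff L2 n"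
proof
  fix g
  have on_orbit: "symbol_coeff L1 n y - symbol_coeff L2 n y = 0"
    if "y \<in> range (\<lambda>k::int. intmul k x1)" for y
  proof -
    from that obtain k where y: "y = intmul k x1" by blast
    have "Rep_ell2 (symbol_op x1 L1 (unit_vector (k - n))) k
        = Rep_ell2 (symbol_op x1 L2 (unit_vector (k - n))) k"
      by (simp only: eq)
    then show ?thesis
      using assms(2,3) by (simp add: y Rep_ell2_symbol_op symbol_apply_unit_vector)
  qed
  have "continuous_on (closure (range (\<lambda>k::int. intmul k x1)))
      (\<lambda>y. symbol_coeff L1 n y - symbol_coeff L2 n y)"
    unfolding dense
    by (intro continuous_on_diff continuous_symbol_coeff assms(4,5))
  from continuous_constant_on_closure[OF this on_orbit] dense
  show "symbol_coeff L1 n g = symbol_coeff L2 n g"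
    by simp
qed

definition symbol_deriv :: "(('g \<Rightarrow> complex) \<Rightarrow> ('g \<Rightarrow> complex)) \<Rightarrow> 'g symbol \<Rightarrow> 'g symbol" where
  "symbol_deriv d L = map (\<lambda>(f, n). (d f, n)) L"

lemma symbol_deriv_simps [simp]:
  "symbol_deriv d [] = []"
  "symbol_deriv d ((f, n) # L) = (d f, n) # symbol_deriv d L"
  "symbol_deriv d (L1 @ L2) = symbol_deriv d L1 @ symbol_deriv d L2"
  by (simp_all add: symbol_deriv_def)

lemma snd_set_symbol_deriv [simp]: "snd ` set (symbol_deriv d L) = snd ` set L"
  by (induction L rule: symbol_induct) simp_all

lemma continuous_symbol_deriv:
  "is_F_derivation d \<Longrightarrow> F_symbol L \<Longrightarrow> continuous_symbol (symbol_deriv d L)"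
  by (induction L rule: symbol_induct) (simp_all add: F_derivation_continuous)

lemma symbol_coeff_deriv:
  assumes "is_F_derivation d" "F_symbol L"
  shows "symbol_coeff (symbol_deriv d L) n = d (symbol_coeff L n)"
  using assms(2)
proof (induction L rule: symbol_induct)
  case (Cons f m L)
  then show ?case
    by (cases "m = n") (simp_all add: F_derivation_add[OF assms(1)] Fspan_symbol_coeff)
qed (simp add: F_derivation_zero[OF assms(1)])

lemma symbol_deriv_scale:
  "is_F_derivation d \<Longrightarrow> F_symbol L \<Longrightarrow> symbol_deriv d (symbol_scale c L) = symbol_scale c (symbol_deriv d L)"
  by (induction L rule: symbol_induct) (simp_all add: F_derivation_scale)

definition sq_l2norm :: "(int \<Rightarrow> complex) \<Rightarrow> real" where
  "sq_l2norm v = (\<Sum>\<^sub>\<infinity>n. (cmod (v n))\<^sup>2)"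

lemma sq_l2norm_add_le:
  assumes "square_summable u" "square_summable v"
  shows "sq_l2norm (\<lambda>n. u n + v n) \<le> 2 * sq_l2norm u + 2 * sq_l2norm v"
proof -
  have summable: "(\<lambda>n. 2 * (cmod (u n))\<^sup>2) summable_on UNIV" "(\<lambda>n. 2 * (cmod (v n))\<^sup>2) summable_on UNIV"
    using assms unfolding square_summable_def by (auto intro: summable_on_cmult_right)
  have "sq_l2norm (\<lambda>n. u n + v n) \<le> (\<Sum>\<^sub>\<infinity>n. 2 * (cmod (u n))\<^sup>2 + 2 * (cmod (v n))\<^sup>2)"
    unfolding sq_l2norm_def
    using square_summable_add[OF assms] summable
    by (intro infsum_mono summable_on_add) (simp_all add: square_summable_def cmod_add_square_le)
  also have "\<dots> = 2 * sq_l2norm u + 2 * sq_l2norm v"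
    using assms summable
    by (simp add: sq_l2norm_def square_summable_def infsum_add infsum_cmult_right)
  finally show ?thesis .
qed

lemma sq_l2norm_bounded_shift_le:
  assumes "\<And>k. cmod (a k) \<le> C"
  shows "sq_l2norm (\<lambda>k. a k * Rep_ell2 x (k - n)) \<le> C\<^sup>2 * sq_l2norm (Rep_ell2 x)"
proof -
  have summable: "(\<lambda>k. (cmod (Rep_ell2 x (k - n)))\<^sup>2) summable_on UNIV"
    using square_summable_shift[OF square_summable_Rep_ell2] by (simp add: square_summable_def)
  have "(cmod (a k))\<^sup>2 \<le> C\<^sup>2" for k
    using assms[of k] by (simp add: power_mono)
  then have "sq_l2norm (\<lambda>k. a k * Rep_ell2 x (k - n)) \<le> (\<Sum>\<^sub>\<infinity>k. C\<^sup>2 * (cmod (Rep_ell2 x (k - n)))\<^sup>2)"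
    unfolding sq_l2norm_def
    using square_summable_bounded_mult[OF square_summable_shift[OF square_summable_Rep_ell2] assms]
    by (intro infsum_mono summable_on_cmult_right summable)
      (simp_all add: square_summable_def norm_mult power_mult_distrib mult_right_mono)
  also have "\<dots> = C\<^sup>2 * sq_l2norm (Rep_ell2 x)"
    unfolding sq_l2norm_def
    by (simp add: infsum_cmult_right[OF summable] infsum_int_shift[of "\<lambda>k. (cmod (Rep_ell2 x k))\<^sup>2"])
  finally show ?thesis .
qed

lemma sq_l2norm_symbol_apply_le:
  "bounded_symbol L \<Longrightarrow> \<exists>K\<ge>0. \<forall>x. sq_l2norm (symbol_apply x1 L x) \<le> K * sq_l2norm (Rep_ell2 x)"
proof (induction L rule: symbol_induct)
  case Nil
  show ?case by (auto simp: sq_l2norm_def)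
next
  case (Cons f n L)
  then obtain C K where C: "\<And>g. cmod (f g) \<le> C" and L: "bounded_symbol L"
    and K: "K \<ge> 0" "\<And>x. sq_l2norm (symbol_apply x1 L x) \<le> K * sq_l2norm (Rep_ell2 x)"
    by auto
  have "sq_l2norm (symbol_apply x1 ((f, n) # L) x) \<le> (2 * C\<^sup>2 + 2 * K) * sq_l2norm (Rep_ell2 x)" for x
  proof -
    have "sq_l2norm (symbol_apply x1 ((f, n) # L) x)
        \<le> 2 * sq_l2norm (\<lambda>k. f (intmul k x1) * Rep_ell2 x (k - n)) + 2 * sq_l2norm (symbol_apply x1 L x)"
    proof -
      have "symbol_apply x1 ((f, n) # L) x
          = (\<lambda>k. f (intmul k x1) * Rep_ell2 x (k - n) + symbol_apply x1 L x k)"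
        by (simp add: fun_eq_iff)
      then show ?thesis
        using sq_l2norm_add_le[OF square_summable_bounded_mult[OF square_summable_shift[OF
              square_summable_Rep_ell2] C] square_summable_symbol_apply[OF L]]
        by simp
    qed
    also have "\<dots> \<le> 2 * (C\<^sup>2 * sq_l2norm (Rep_ell2 x)) + 2 * (K * sq_l2norm (Rep_ell2 x))"
      using sq_l2norm_bounded_shift_le[of "\<lambda>k. f (intmul k x1)" C x n] C K(2)[of x] by simp
    finally show ?thesis by (simp add: algebra_simps)
  qed
  moreover have "0 \<le> 2 * C\<^sup>2 + 2 * K"
    using K(1) by simp
  ultimately show ?case
    by blast
qed

lemma symbol_apply_plus: "symbol_apply x1 L (x + y) k = symbol_apply x1 L x k + symbol_apply x1 L y k"
  by (induction L rule: symbol_induct) (simp_all add: Rep_ell2_plus algebra_simps)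

lemma symbol_apply_l2scale: "symbol_apply x1 L (l2scale c x) k = c * symbol_apply x1 L x k"
  by (induction L rule: symbol_induct) (simp_all add: Rep_ell2_l2scale algebra_simps)

lemma bounded_op_symbol_op:
  assumes "bounded_symbol L"
  shows "bounded_op (symbol_op x1 L)"
  unfolding bounded_op_def
proof (intro conjI allI)
  fix x y
  show "symbol_op x1 L (x + y) = symbol_op x1 L x + symbol_op x1 L y"
    by (rule ell2_eqI) (simp add: assms Rep_ell2_plus Rep_ell2_symbol_op symbol_apply_plus)
next
  fix c x
  show "symbol_op x1 L (l2scale c x) = l2scale c (symbol_op x1 L x)"
    by (rule ell2_eqI) (simp add: assms Rep_ell2_l2scale Rep_ell2_symbol_op symbol_apply_l2scale)
next
  obtain K where K: "K \<ge> 0" "\<And>x. sq_l2norm (symbol_apply x1 L x) \<le> K * sq_l2norm (Rep_ell2 x)"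
    using sq_l2norm_symbol_apply_le[OF assms] by blast
  have "l2norm (symbol_op x1 L x) \<le> sqrt K * l2norm x" for x
    using K(2)[of x]
    by (simp add: l2norm_def sq_l2norm_def Rep_ell2_symbol_op assms real_sqrt_mult[symmetric])
  then show "\<exists>K. \<forall>x. l2norm (symbol_op x1 L x) \<le> K * l2norm x"
    by blast
qed

lemma op_scale_0: "op_scale 0 T = op_zero"
  by (simp add: op_scale_def op_zero_def l2scale_def zero_ell2_def)

lemma op_zero_in_star_alg: "T \<in> star_alg S \<Longrightarrow> op_zero \<in> star_alg S"
  using star_alg.scale[of T S 0] by (simp add: op_scale_0)

lemma Vpow_in_star_alg:
  assumes "Vop \<in> star_alg S" "Vinv \<in> star_alg S"
  shows "Vpow n \<in> star_alg S"
proof (induction n rule: int_induct[where k = 0])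
  case base
  show ?case
    using star_alg.mult[OF assms] Vpow_add[of 1 "- 1"] by (simp add: Vpow_1 Vpow_minus_1)
next
  case (step1 i)
  then show ?case
    using star_alg.mult[OF assms(1) step1(2)] Vpow_add[of 1 i] by (simp add: Vpow_1 add.commute)
next
  case (step2 i)
  then show ?case
    using star_alg.mult[OF assms(2) step2(2)] Vpow_add[of "- 1" i] by (simp add: Vpow_minus_1)
qed

lemma symbol_op_in_star_alg:
  assumes "Vop \<in> star_alg S" "Vinv \<in> star_alg S" "bounded_symbol L"
    and "\<And>f n. (f, n) \<in> set L \<Longrightarrow> Mop x1 f \<in> star_alg S"
  shows "symbol_op x1 L \<in> star_alg S"
  using assms(3,4)
proof (induction L rule: symbol_induct)
  case Nil
  show ?case
    using op_zero_in_star_alg[OF assms(1)] by (simp add: op_zero_symbol[symmetric])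
next
  case (Cons f n L)
  have "Mop x1 f \<in> star_alg S"
    by (rule Cons.prems(2)[of f n]) simp
  moreover have "symbol_op x1 L \<in> star_alg S"
  proof (rule Cons.IH)
    show "bounded_symbol L"
      using Cons.prems(1) by simp
    show "Mop x1 g \<in> star_alg S" if "(g, m) \<in> set L" for g m
      using Cons.prems(2)[of g m] that by simp
  qed
  ultimately have "op_add (op_mult (Mop x1 f) (Vpow n)) (symbol_op x1 L) \<in> star_alg S"
    by (intro star_alg.add star_alg.mult Vpow_in_star_alg assms(1,2))
  moreover have "symbol_op x1 ((f, n) # L) = op_add (op_mult (Mop x1 f) (Vpow n)) (symbol_op x1 L)"
    unfolding Mop_mult_Vpow using Cons.prems(1) by (intro symbol_op_Cons) simp_all
  ultimately show ?case
    by simp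
qed

lemma opnorm_diff_self: "opnorm (op_diff T T) = 0"
proof -
  have "op_diff T T = (\<lambda>x. 0)"
    by (rule ext, rule ell2_eqI) (simp add: op_diff_def Rep_ell2_minus Rep_ell2_zero)
  moreover have "l2norm 0 = 0"
    by (simp add: l2norm_def Rep_ell2_zero)
  moreover from this have "{x. l2norm x \<le> 1} \<noteq> {}"
    by (auto intro!: exI[of _ 0])
  ultimately show ?thesis
    by (simp add: opnorm_def)
qed

lemma symbol_op_in_Balg:
  fixes x1 :: "'g::topological_ab_group_add"
  assumes "compact (UNIV :: 'g set)" "continuous_symbol L"
  shows "symbol_op x1 L \<in> Balg x1"
proof -
  let ?S = "{Vop} \<union> {Mop x1 f | f. f \<in> CG}"
  have bounded: "bounded_symbol L"
    by (rule bounded_symbol_if_continuous_symbol[OF assms])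
  have "Vop \<in> star_alg ?S"
    by (simp add: star_alg.gen)
  moreover have "Mop x1 f \<in> star_alg ?S" if "(f, n) \<in> set L" for f n
    using assms(2) that by (intro star_alg.gen) (auto simp: continuous_symbol_def CG_def)
  ultimately have "symbol_op x1 L \<in> star_alg ?S"
    using star_alg.adj[of Vop ?S] by (intro symbol_op_in_star_alg bounded) (simp_all add: op_adj_Vop)
  with bounded show ?thesis
    unfolding Balg_def cstar_alg_def
    by (auto simp: opnorm_diff_self bounded_op_symbol_op intro!: bexI[of _ "symbol_op x1 L"])
qed

lemma Vop_in_Bcal: "Vop \<in> Bcal x1" and Vinv_in_Bcal: "Vinv \<in> Bcal x1"
  by (simp_all add: Bcal_def star_alg.gen)

lemma Vpow_in_Bcal: "Vpow n \<in> Bcal x1"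
  using Vop_in_Bcal Vinv_in_Bcal unfolding Bcal_def by (rule Vpow_in_star_alg)

lemma Mop_in_Bcal:
  fixes x1 :: "'g::topological_ab_group_add"
  assumes "compact (UNIV :: 'g set)" "f \<in> Fspan"
  shows "Mop x1 f \<in> Bcal x1"
  using assms(2)
proof (induction f rule: Fspan_induct)
  case zero
  have "Mop x1 (\<lambda>_. 0) = op_zero"
    unfolding Mop_symbol op_zero_symbol[of x1] by (rule symbol_op_eqI) simp
  then show ?case
    using op_zero_in_star_alg[OF Vop_in_Bcal[unfolded Bcal_def]] by (simp add: Bcal_def)
next
  case (step ch c g)
  have "\<forall>x. cmod (ch x) \<le> 1" "\<forall>x. cmod (c * ch x) \<le> cmod c"
    using step(1) by (simp_all add: characters_def norm_mult)
  then have bounded: "bounded_symbol [(ch, 0)]" "bounded_symbol [(\<lambda>x. c * ch x, 0)]"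
    by auto
  have "bounded_symbol [(g, 0)]"
    using bounded_continuous_function[OF assms(1) continuous_on_Fspan[OF step(2)]] by simp
  then have "Mop x1 (\<lambda>x. c * ch x + g x) = op_add (op_scale c (Mop x1 ch)) (Mop x1 g)"
    by (simp only: Mop_add[OF bounded(2)] Mop_scale[OF bounded(1)])
  moreover have "Mop x1 ch \<in> Bcal x1"
    using step(1) by (auto simp: Bcal_def intro: star_alg.gen)
  ultimately show ?case
    using step(3) unfolding Bcal_def by (simp add: star_alg.add star_alg.scale)
qed

lemma symbol_op_in_Bcal:
  fixes x1 :: "'g::topological_ab_group_add"
  assumes "compact (UNIV :: 'g set)" "F_symbol L"
  shows "symbol_op x1 L \<in> Bcal x1"
proof -
  have "Mop x1 f \<in> Bcal x1" if "(f, n) \<in> set L" for f n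
    using assms that by (intro Mop_in_Bcal) (auto simp: F_symbol_def)
  then show ?thesis
    using Vop_in_Bcal Vinv_in_Bcal bounded_symbol_if_F_symbol[OF assms] unfolding Bcal_def
    by (intro symbol_op_in_star_alg)
qed

lemma Bcal_imp_symbol_op:
  fixes x1 :: "'g::topological_ab_group_add"
  assumes "compact (UNIV :: 'g set)" "b \<in> Bcal x1"
  shows "\<exists>L. F_symbol L \<and> b = symbol_op x1 L"
  using assms(2) unfolding Bcal_def
proof (induction rule: star_alg.induct)
  case (gen T)
  have one: "(\<lambda>_. 1) \<in> (Fspan :: ('g \<Rightarrow> complex) set)"
    by (rule characters_Fspan[OF characters_one])
  from gen consider "T = Vpow 1" | "T = Vpow (- 1)" | ch where "ch \<in> characters" "T = Mop x1 ch"
    by (auto simp: Vpow_1 Vpow_minus_1)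
  then show ?case
  proof cases
    case 1
    with one show ?thesis by (auto simp: Vpow_symbol[of _ x1] intro!: exI[of _ "[(\<lambda>_. 1, 1)]"])
  next
    case 2
    with one show ?thesis by (auto simp: Vpow_symbol[of _ x1] intro!: exI[of _ "[(\<lambda>_. 1, - 1)]"])
  next
    case 3
    then show ?thesis by (auto simp: Mop_symbol characters_Fspan intro!: exI[of _ "[(ch, 0)]"])
  qed
next
  case (add T1 T2)
  then obtain L1 L2 where "F_symbol L1" "T1 = symbol_op x1 L1" "F_symbol L2" "T2 = symbol_op x1 L2"
    by blast
  then show ?case
    using bounded_symbol_if_F_symbol[OF assms(1)]
    by (intro exI[of _ "L1 @ L2"]) (simp add: symbol_op_append)
next
  case (scale T c)
  then obtain L where "F_symbol L" "T = symbol_op x1 L"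
    by blast
  then show ?case
    using bounded_symbol_if_F_symbol[OF assms(1)]
    by (intro exI[of _ "symbol_scale c L"]) (simp add: symbol_op_scale F_symbol_scale)
next
  case (mult T1 T2)
  then obtain L1 L2 where "F_symbol L1" "T1 = symbol_op x1 L1" "F_symbol L2" "T2 = symbol_op x1 L2"
    by blast
  then show ?case
    using bounded_symbol_if_F_symbol[OF assms(1)]
    by (intro exI[of _ "symbol_mult x1 L1 L2"]) (simp add: symbol_op_mult F_symbol_mult)
next
  case (adj T)
  then obtain L where "F_symbol L" "T = symbol_op x1 L"
    by blast
  then show ?case
    using bounded_symbol_if_F_symbol[OF assms(1)]
    by (intro exI[of _ "symbol_adj x1 L"]) (simp add: op_adj_symbol_op F_symbol_adj)
qed

lemma Bcal_eq_symbol_ops: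
  fixes x1 :: "'g::topological_ab_group_add"
  assumes "compact (UNIV :: 'g set)"
  shows "Bcal x1 = {symbol_op x1 L | L. F_symbol L}"
  using Bcal_imp_symbol_op[OF assms] symbol_op_in_Bcal[OF assms] by blast

definition phase :: "real \<Rightarrow> int \<Rightarrow> complex" where
  "phase \<theta> l = exp (\<i> * complex_of_real (\<theta> * real_of_int l))"

lemma Rep_ell2_expL: "Rep_ell2 (expL \<theta> x) = (\<lambda>l. phase \<theta> l * Rep_ell2 x l)"
  unfolding expL_def phase_def[symmetric]
  by (intro Rep_ell2_Abs_ell2 square_summable_bounded_mult[OF square_summable_Rep_ell2, where C = 1])
    (simp add: phase_def)

lemma phase_conj: "phase \<theta> l * phase (- \<theta>) (l - n) = phase \<theta> n"
  unfolding phase_def exp_add[symmetric] by (simp add: algebra_simps)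

lemma phase_minus: "phase (- \<theta>) n * phase \<theta> n = 1"
  unfolding phase_def exp_add[symmetric] by (simp add: algebra_simps)

text \<open>Conjugation by e^{i\<theta>L} multiplies the coefficient of V^n by e^{i\<theta>n}.\<close>

definition symbol_phase :: "real \<Rightarrow> 'g symbol \<Rightarrow> 'g symbol" where
  "symbol_phase \<theta> L = map (\<lambda>(f, n). (\<lambda>g. phase \<theta> n * f g, n)) L"

lemma symbol_phase_simps [simp]:
  "symbol_phase \<theta> [] = []"
  "symbol_phase \<theta> ((f, n) # L) = (\<lambda>g. phase \<theta> n * f g, n) # symbol_phase \<theta> L"
  by (simp_all add: symbol_phase_def)

lemma symbol_phase_minus: "symbol_phase (- \<theta>) (symbol_phase \<theta> L) = L"
  by (induction L rule: symbol_induct) (simp_all add: mult.assoc[symmetric] phase_minus)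

lemma bounded_symbol_phase: "bounded_symbol L \<Longrightarrow> bounded_symbol (symbol_phase \<theta> L)"
  by (induction L rule: symbol_induct) (auto simp: norm_mult phase_def)

lemma F_symbol_phase: "F_symbol L \<Longrightarrow> F_symbol (symbol_phase \<theta> L)"
  by (induction L rule: symbol_induct) (simp_all add: Fspan_scale)

lemma symbol_deriv_phase:
  "is_F_derivation d \<Longrightarrow> F_symbol L \<Longrightarrow> symbol_deriv d (symbol_phase \<theta> L) = symbol_phase \<theta> (symbol_deriv d L)"
  by (induction L rule: symbol_induct) (simp_all add: F_derivation_scale)

lemma symbol_apply_expL_conj:
  "phase \<theta> l * symbol_apply x1 L (expL (- \<theta>) x) l = symbol_apply x1 (symbol_phase \<theta> L) x l"
proof (induction L rule: symbol_induct)
  case (Cons f n L)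
  have "phase \<theta> l * (f (intmul l x1) * (phase (- \<theta>) (l - n) * Rep_ell2 x (l - n)))
      = (phase \<theta> l * phase (- \<theta>) (l - n)) * f (intmul l x1) * Rep_ell2 x (l - n)"
    by (simp add: algebra_simps)
  with Cons.IH show ?case
    by (simp add: Rep_ell2_expL distrib_left phase_conj)
qed simp

lemma expL_conj_symbol_op:
  assumes "bounded_symbol L"
  shows "op_mult (op_mult (expL \<theta>) (symbol_op x1 L)) (expL (- \<theta>)) = symbol_op x1 (symbol_phase \<theta> L)"
proof (rule ext, rule ell2_eqI)
  fix x l
  show "Rep_ell2 (op_mult (op_mult (expL \<theta>) (symbol_op x1 L)) (expL (- \<theta>)) x) l
      = Rep_ell2 (symbol_op x1 (symbol_phase \<theta> L) x) l"
    using assms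
    by (simp add: op_mult_def Rep_ell2_expL Rep_ell2_symbol_op bounded_symbol_phase symbol_apply_expL_conj)
qed

lemma Vpow_zero_vector [simp]: "Vpow n 0 = 0"
  by (simp add: Vpow_def Rep_ell2_zero zero_ell2_def[symmetric])

lemma Mop_zero_vector [simp]: "Mop x1 f 0 = 0"
  by (simp add: Mop_def Rep_ell2_zero zero_ell2_def[symmetric])

lemma ell2_add_zero [simp]: "(a::ell2) + 0 = a" "0 + (a::ell2) = a"
  by (simp_all add: ell2_eqI Rep_ell2_plus Rep_ell2_zero)

lemma ell2_eq_add_self: "(a::ell2) = a + a \<Longrightarrow> a = 0"
  by (rule ell2_eqI) (metis Rep_ell2_plus Rep_ell2_zero add_cancel_left_right)

lemma B_derivation_zero:
  assumes "is_B_derivation x1 \<delta>"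
  shows "\<delta> op_zero = op_zero"
proof -
  have "\<delta> (op_scale 0 Vop) = op_scale 0 (\<delta> Vop)"
    using assms Vop_in_Bcal unfolding is_B_derivation_def by blast
  then show ?thesis
    by (simp add: op_scale_0)
qed

lemma B_derivation_Vpow:
  assumes der: "is_B_derivation x1 \<delta>" and "\<delta> Vop = op_zero"
  shows "\<delta> (Vpow n) = op_zero"
proof -
  have leibniz: "\<delta> (Vpow (k + m)) = op_add (op_mult (\<delta> (Vpow k)) (Vpow m)) (op_mult (Vpow k) (\<delta> (Vpow m)))"
    for k m
    using der Vpow_in_Bcal[of k x1] Vpow_in_Bcal[of m x1] unfolding is_B_derivation_def
    by (simp add: Vpow_add[symmetric])
  have zero: "\<delta> (Vpow 0) = op_zero"
    using leibniz[of 0 0] by (simp add: fun_eq_iff op_add_def op_mult_def op_zero_def Vpow_0 ell2_eq_add_self)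
  have V: "\<delta> (Vpow 1) = op_zero"
    using assms(2) by (simp add: Vpow_1)
  have "op_mult (Vpow 1) (\<delta> (Vpow (- 1))) = op_zero"
    using leibniz[of 1 "- 1"] zero V by (simp add: fun_eq_iff op_add_def op_mult_def op_zero_def)
  then have "Vpow (- 1) (Vpow 1 (\<delta> (Vpow (- 1)) x)) = 0" for x
    by (simp add: fun_eq_iff op_mult_def op_zero_def)
  then have Vinv: "\<delta> (Vpow (- 1)) = op_zero"
    using fun_cong[OF Vpow_add[of "- 1" 1]] by (simp add: fun_eq_iff op_mult_def op_zero_def Vpow_0)
  show ?thesis
  proof (induction n rule: int_induct[where k = 0])
    case (step1 i)
    then show ?case
      using leibniz[of 1 i] V by (simp add: add.commute fun_eq_iff op_add_def op_mult_def op_zero_def)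
  next
    case (step2 i)
    then show ?case
      using leibniz[of "- 1" i] Vinv by (simp add: fun_eq_iff op_add_def op_mult_def op_zero_def)
  qed (rule zero)
qed

lemma B_derivation_symbol_op:
  fixes x1 :: "'g::topological_ab_group_add"
  assumes cpt: "compact (UNIV :: 'g set)" and d: "is_F_derivation d"
    and der: "is_B_derivation x1 \<delta>" and V: "\<delta> Vop = op_zero"
    and M: "\<forall>f\<in>Fspan. \<delta> (Mop x1 f) = Mop x1 (d f)"
    and L: "F_symbol L"
  shows "\<delta> (symbol_op x1 L) = symbol_op x1 (symbol_deriv d L)"
  using L
proof (induction L rule: symbol_induct)
  case Nil
  show ?case
    using B_derivation_zero[OF der] by (simp add: op_zero_symbol[symmetric])
next
  case (Cons f n L)
  then have f: "f \<in> Fspan" and L: "F_symbol L"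
    by simp_all
  have bounded: "bounded_symbol [(f, n)]" "bounded_symbol [(d f, n)]"
    using bounded_continuous_function[OF cpt continuous_on_Fspan[OF f]]
      bounded_continuous_function[OF cpt F_derivation_continuous[OF d f]] by simp_all
  have in_Bcal: "Mop x1 f \<in> Bcal x1" "Vpow n \<in> Bcal x1" "op_mult (Mop x1 f) (Vpow n) \<in> Bcal x1"
      "symbol_op x1 L \<in> Bcal x1"
    using Mop_in_Bcal[OF cpt f] Vpow_in_Bcal symbol_op_in_Bcal[OF cpt L] star_alg.mult
    unfolding Bcal_def by blast+
  have "symbol_op x1 ((f, n) # L) = op_add (op_mult (Mop x1 f) (Vpow n)) (symbol_op x1 L)"
    unfolding Mop_mult_Vpow using bounded(1) bounded_symbol_if_F_symbol[OF cpt L]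
    by (rule symbol_op_Cons)
  then have "\<delta> (symbol_op x1 ((f, n) # L))
      = op_add (op_add (op_mult (Mop x1 (d f)) (Vpow n)) (op_mult (Mop x1 f) (\<delta> (Vpow n))))
          (symbol_op x1 (symbol_deriv d L))"
    using der in_Bcal M f Cons.IH[OF L] unfolding is_B_derivation_def by simp
  also have "\<dots> = op_add (symbol_op x1 [(d f, n)]) (symbol_op x1 (symbol_deriv d L))"
    by (simp add: B_derivation_Vpow[OF der V] Mop_mult_Vpow[symmetric] fun_eq_iff op_add_def
        op_mult_def op_zero_def)
  also have "\<dots> = symbol_op x1 (symbol_deriv d ((f, n) # L))"
    using bounded(2) bounded_symbol_if_continuous_symbol[OF cpt continuous_symbol_deriv[OF d L]]
    by (simp add: symbol_op_append)
  finally show ?case .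
qed

section \<open>The derivation induced by \<open>\<partial>\<close>\<close>

locale equivariant_F_derivation =
  fixes x1 :: "'g::topological_ab_group_add" and d :: "('g \<Rightarrow> complex) \<Rightarrow> ('g \<Rightarrow> complex)"
  assumes compact_UNIV: "compact (UNIV :: 'g set)"
    and dense_orbit: "closure (range (\<lambda>n::int. intmul n x1)) = UNIV"
    and F_derivation: "is_F_derivation d"
    and shift_commuting_x1: "shift_commuting d x1"
begin

lemma bounded_F_symbol: "F_symbol (L :: 'g symbol) \<Longrightarrow> bounded_symbol L"
  by (rule bounded_symbol_if_F_symbol[OF compact_UNIV])

lemma bounded_symbol_deriv: "F_symbol L \<Longrightarrow> bounded_symbol (symbol_deriv d L)"
  by (intro bounded_symbol_if_continuous_symbol[OF compact_UNIV] continuous_symbol_deriv[OF F_derivation])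

lemma symbol_op_deriv_well_defined:
  assumes "F_symbol L1" "F_symbol L2" and eq: "symbol_op x1 L1 = symbol_op x1 L2"
  shows "symbol_op x1 (symbol_deriv d L1) = symbol_op x1 (symbol_deriv d L2)"
proof (rule symbol_op_eqI)
  fix x k
  let ?N = "snd ` set L1 \<union> snd ` set L2"
  have "symbol_coeff L1 n = symbol_coeff L2 n" for n
    using assms by (intro symbol_coeff_unique[OF dense_orbit] bounded_F_symbol
        continuous_symbol_if_F_symbol)
  then show "symbol_apply x1 (symbol_deriv d L1) x k = symbol_apply x1 (symbol_deriv d L2) x k"
    using assms(1,2)
    by (simp add: symbol_apply_eq_coeff_sum[of ?N] symbol_coeff_deriv[OF F_derivation])
qed

text \<open>By well-definedness the choice of representative does not matter;
  outside Bcal x1 the value is junk.\<close>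

definition delta :: "op \<Rightarrow> op" where
  "delta T = symbol_op x1 (symbol_deriv d (SOME L. F_symbol L \<and> T = symbol_op x1 L))"

lemma delta_symbol_op:
  assumes "F_symbol L"
  shows "delta (symbol_op x1 L) = symbol_op x1 (symbol_deriv d L)"
proof -
  have "\<exists>L'. F_symbol L' \<and> symbol_op x1 L = symbol_op x1 L'"
    using assms by blast
  then have "F_symbol (SOME L'. F_symbol L' \<and> symbol_op x1 L = symbol_op x1 L')
      \<and> symbol_op x1 L = symbol_op x1 (SOME L'. F_symbol L' \<and> symbol_op x1 L = symbol_op x1 L')"
    by (rule someI_ex)
  then show ?thesis
    unfolding delta_def using symbol_op_deriv_well_defined assms by metis
qed

lemma F_derivation_monomial:
  assumes "f \<in> Fspan" "h \<in> Fspan"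
  shows "d (\<lambda>g. f g * h (g - intmul n x1))
    = (\<lambda>g. d f g * h (g - intmul n x1) + f g * d h (g - intmul n x1))"
proof -
  have "d (\<lambda>g. h (g - intmul n x1)) = (\<lambda>g. d h (g - intmul n x1))"
    using shift_commutingD[OF shift_commuting_intmul[OF shift_commuting_x1, of "- n"] assms(2)]
    by (simp add: intmul_minus)
  then show ?thesis
    using F_derivation_mult[OF F_derivation assms(1) Fspan_shift[OF assms(2), of "- intmul n x1"]]
    by simp
qed

lemma symbol_apply_deriv_mult:
  assumes "F_symbol L1" "F_symbol L2"
  shows "symbol_apply x1 (symbol_deriv d (symbol_mult x1 L1 L2)) x k
    = symbol_apply x1 (symbol_mult x1 (symbol_deriv d L1) L2) x k
      + symbol_apply x1 (symbol_mult x1 L1 (symbol_deriv d L2)) x k"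
  using assms(1)
proof (induction L1 rule: symbol_induct)
  case (Cons f n L1)
  have "symbol_apply x1 (symbol_deriv d (monomial_mult x1 f n L2)) x k
      = symbol_apply x1 (monomial_mult x1 (d f) n L2) x k
        + symbol_apply x1 (monomial_mult x1 f n (symbol_deriv d L2)) x k"
    using assms(2) Cons.prems
    by (induction L2 rule: symbol_induct) (simp_all add: F_derivation_monomial algebra_simps)
  with Cons show ?case
    by simp
qed simp

lemma delta_add:
  "F_symbol L1 \<Longrightarrow> F_symbol L2 \<Longrightarrow>
    delta (op_add (symbol_op x1 L1) (symbol_op x1 L2))
    = op_add (delta (symbol_op x1 L1)) (delta (symbol_op x1 L2))"
  by (simp add: symbol_op_append bounded_F_symbol bounded_symbol_deriv delta_symbol_op)

lemma delta_scale:
  "F_symbol L \<Longrightarrow> delta (op_scale c (symbol_op x1 L)) = op_scale c (delta (symbol_op x1 L))"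
  by (simp add: symbol_op_scale bounded_F_symbol bounded_symbol_deriv delta_symbol_op F_symbol_scale
      symbol_deriv_scale[OF F_derivation])

lemma delta_mult:
  assumes "F_symbol L1" "F_symbol L2"
  shows "delta (op_mult (symbol_op x1 L1) (symbol_op x1 L2))
    = op_add (op_mult (delta (symbol_op x1 L1)) (symbol_op x1 L2))
        (op_mult (symbol_op x1 L1) (delta (symbol_op x1 L2)))"
proof -
  have "op_add (op_mult (delta (symbol_op x1 L1)) (symbol_op x1 L2))
        (op_mult (symbol_op x1 L1) (delta (symbol_op x1 L2)))
      = symbol_op x1 (symbol_mult x1 (symbol_deriv d L1) L2 @ symbol_mult x1 L1 (symbol_deriv d L2))"
    using assms
    by (simp add: delta_symbol_op symbol_op_mult bounded_F_symbol bounded_symbol_deriv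
        symbol_op_append bounded_symbol_mult)
  also have "\<dots> = symbol_op x1 (symbol_deriv d (symbol_mult x1 L1 L2))"
    using assms by (intro symbol_op_eqI) (simp add: symbol_apply_deriv_mult)
  finally show ?thesis
    using assms by (simp add: symbol_op_mult bounded_F_symbol delta_symbol_op F_symbol_mult)
qed

lemma Bcal_cases:
  assumes "b \<in> Bcal x1"
  obtains L where "F_symbol L" "b = symbol_op x1 L"
  using assms Bcal_eq_symbol_ops[OF compact_UNIV] by blast

lemma is_B_derivation_delta: "is_B_derivation x1 delta"
  unfolding is_B_derivation_def
proof (intro conjI ballI allI)
  fix b assume "b \<in> Bcal x1"
  then obtain L where "F_symbol L" "b = symbol_op x1 L"
    by (rule Bcal_cases)
  then show "delta b \<in> Balg x1"
    by (simp add: delta_symbol_op symbol_op_in_Balg[OF compact_UNIV]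
        continuous_symbol_deriv[OF F_derivation])
next
  fix a c assume "a \<in> Bcal x1"
  then show "delta (op_scale c a) = op_scale c (delta a)"
    by (auto elim: Bcal_cases simp: delta_scale)
next
  fix a b assume "a \<in> Bcal x1" "b \<in> Bcal x1"
  then show "delta (op_add a b) = op_add (delta a) (delta b)"
    and "delta (op_mult a b) = op_add (op_mult (delta a) b) (op_mult a (delta b))"
    by (auto elim!: Bcal_cases simp: delta_add delta_mult)
qed

lemma delta_Vop: "delta Vop = op_zero"
proof -
  have "delta Vop = symbol_op x1 [(d (\<lambda>_. 1), 1)]"
    using delta_symbol_op[of "[(\<lambda>_. 1, 1)]"] characters_Fspan[OF characters_one]
    by (simp add: Vpow_symbol[of 1 x1, symmetric] Vpow_1)
  also have "\<dots> = op_zero"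
    unfolding op_zero_symbol[of x1] F_derivation_one[OF F_derivation]
    by (rule symbol_op_eqI) simp
  finally show ?thesis .
qed

lemma delta_Mop: "f \<in> Fspan \<Longrightarrow> delta (Mop x1 f) = Mop x1 (d f)"
  using delta_symbol_op[of "[(f, 0)]"] by (simp add: Mop_symbol)

lemma delta_unique:
  assumes "is_B_derivation x1 \<delta>" "\<delta> Vop = op_zero" "\<forall>f\<in>Fspan. \<delta> (Mop x1 f) = Mop x1 (d f)"
    and "b \<in> Bcal x1"
  shows "\<delta> b = delta b"
  using assms(4)
  by (auto elim!: Bcal_cases simp: delta_symbol_op
      B_derivation_symbol_op[OF compact_UNIV F_derivation assms(1-3)])

lemma invariant_der_delta: "invariant_der x1 delta"
  unfolding invariant_der_def
proof (intro allI ballI)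
  fix \<theta> b assume "b \<in> Bcal x1"
  then obtain L where L: "F_symbol L" "b = symbol_op x1 L"
    by (rule Bcal_cases)
  have "delta (op_mult (op_mult (expL \<theta>) b) (expL (- \<theta>)))
      = symbol_op x1 (symbol_phase \<theta> (symbol_deriv d L))"
    using L by (simp add: expL_conj_symbol_op bounded_F_symbol delta_symbol_op F_symbol_phase
        symbol_deriv_phase[OF F_derivation])
  then show "op_mult (op_mult (expL (- \<theta>)) (delta (op_mult (op_mult (expL \<theta>) b) (expL (- \<theta>)))))
      (expL \<theta>) = delta b"
    using expL_conj_symbol_op[OF bounded_symbol_phase[OF bounded_symbol_deriv[OF L(1)]], of "- \<theta>"]
    by (simp add: L delta_symbol_op symbol_phase_minus)
qed

end

theorem lemma3p10:
  fixes x1 :: "'g::{topological_ab_group_add, t2_space}"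
    and d :: "('g \<Rightarrow> complex) \<Rightarrow> ('g \<Rightarrow> complex)"
  assumes "compact (UNIV :: 'g set)"
    and "infinite (UNIV :: 'g set)"
    and "closure (range (\<lambda>n::int. intmul n x1)) = UNIV"
    and "is_F_derivation d"
    and "\<forall>f\<in>Fspan. (d f) \<circ> (\<lambda>x. x + x1) = d (f \<circ> (\<lambda>x. x + x1))"
  shows "\<exists>\<delta>. is_B_derivation x1 \<delta> \<and> \<delta> Vop = op_zero
            \<and> (\<forall>f\<in>Fspan. \<delta> (Mop x1 f) = Mop x1 (d f))
            \<and> (\<forall>\<delta>'. (is_B_derivation x1 \<delta>' \<and> \<delta>' Vop = op_zero
                       \<and> (\<forall>f\<in>Fspan. \<delta>' (Mop x1 f) = Mop x1 (d f)))
                     \<longrightarrow> (\<forall>b\<in>Bcal x1. \<delta>' b = \<delta> b))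
            \<and> invariant_der x1 \<delta>"
proof -
  have "shift_commuting d x1"
    using assms(5) by (simp add: shift_commuting_def o_def)
  then interpret equivariant_F_derivation x1 d
    using assms(1,3,4) by unfold_locales
  show ?thesis
    using is_B_derivation_delta delta_Vop delta_Mop delta_unique invariant_der_delta by blast
qed

end
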